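(* Let $n\ge1$, $N=2^n$. For every 4-round affine key-schedule $(\omega,\gamma)$ there exists a distinguisher $D$ making $0$ queries to the round functions and $4$ queries to the related-key oracle such that, for any four functions $f_1,f_2,f_3,f_4:\{0,1\}^n\to\{0,1\}^n$, $$\mathbf{Adv}^{\oplus\text{-rka}}_{\mathsf{KAFw}^{\vec f,(\omega,\gamma)}}(D)\ge 1-\frac{1}{N^2-1},$$ where $\vec f=(f_1,f_2,f_3,f_4)$.
   Context: Identify $\{0,1\}^n$ with $\mathbb{F}_2^n$; $X\|Y$ denotes concatenation. A $t$-round affine key-schedule $(\omega,\gamma)$ is given by $n\times n$ matrices $M^{(w)}_0,\dots,M^{(w)}_3,M_1,\dots,M_t$ over $\mathbb{F}_2$ and constants $C^{(w)}_0,\dots,C^{(w)}_3,C_1,\dots,C_t\in\mathbb{F}_2^n$, with $\omega_i(k)=M^{(w)}_i\cdot k\oplus C^{(w)}_i$ ($i=0,\dots,3$) and $\gamma_j(k)=M_j\cdot k\oplus C_j$ ($j=1,\dots,t$). For $f:\{0,1\}^n\to\{0,1\}^n$ and $\kappa\in\{0,1\}^n$ let $\Psi^f_\kappa(W_L\|W_R)=W_R\|(W_L\oplus f(\kappa\oplus W_R))$. For functions $\vec f=(f_1,\dots,f_t)$ define the $t$-round cipher with key $k$: $\mathsf{KAFw}^{\vec f,(\omega,\gamma)}_k(W)=(\omega_2(k)\|\omega_3(k))\oplus\Psi^{f_t}_{\gamma_t(k)}\circ\cdots\circ\Psi^{f_1}_{\gamma_1(k)}\big((\omega_0(k)\|\omega_1(k))\oplus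 W\big)$. For a blockcipher $E$ ($n$-bit keys, $2n$-bit blocks) and key $k$, $\mathsf{RK}[E_k]$ maps $(\Delta,LR)\mapsto E_{k\oplus\Delta}(LR)$ and its inverse maps $(\Delta,ST)\mapsto E^{-1}_{k\oplus\Delta}(ST)$. For a distinguisher $D$ with two-sided access to the related-key oracle and access to $\vec f$, $\mathbf{Adv}^{\oplus\text{-rka}}_{\mathsf{KAFw}^{\vec f,(\omega,\gamma)}}(D)=\big|\Pr_{\mathsf{IC},k}[D^{\mathsf{RK}[\mathsf{IC}_k],\vec f}=1]-\Pr_k[D^{\mathsf{RK}[\mathsf{KAFw}^{\vec f,(\omega,\gamma)}_k],\vec f}=1]\big|$, where $k$ is uniform in $\{0,1\}^n$ and $\mathsf{IC}$ is a uniformly random blockcipher with $2n$-bit blocks and $n$-bit keys. *)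

theory Defs
  imports "HOL-Probability.Probability" "HOL-Library.Z2"
begin

text \<open>F_2^n is modelled as bit ^ 'n (n = CARD('n)); XOR is +.
  A 2n-bit block W_L || W_R is modelled as the pair (W_L, W_R).\<close>

type_synonym 'n key = "bit ^ 'n"
type_synonym 'n block = "(bit ^ 'n) \<times> (bit ^ 'n)"
type_synonym 'n rf = "bit ^ 'n \<Rightarrow> bit ^ 'n"

definition xorb :: "'n::finite block \<Rightarrow> 'n block \<Rightarrow> 'n block" where
  "xorb X Y = (fst X + fst Y, snd X + snd Y)"

definition Psi :: "'n::finite rf \<Rightarrow> 'n key \<Rightarrow> 'n block \<Rightarrow> 'n block" where
  "Psi f \<kappa> W = (snd W, fst W + f (\<kappa> + snd W))"

definition aff :: "bit ^ 'n ^ 'n \<Rightarrow> bit ^ 'n \<Rightarrow> 'n::finite key \<Rightarrow> bit ^ 'n" where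
  "aff M C k = M *v k + C"

fun rounds :: "'n::finite rf list \<Rightarrow> (nat \<Rightarrow> bit ^ 'n ^ 'n) \<Rightarrow> (nat \<Rightarrow> bit ^ 'n)
    \<Rightarrow> 'n key \<Rightarrow> nat \<Rightarrow> 'n block \<Rightarrow> 'n block" where
  "rounds fs M C k 0 W = W"
| "rounds fs M C k (Suc j) W =
     Psi (fs ! j) (aff (M (Suc j)) (C (Suc j)) k) (rounds fs M C k j W)"

text \<open>KAFw^{f,(omega,gamma)}_k with t = length fs rounds;
  Mw, Cw give omega_0..omega_3, M, C give gamma_1..gamma_t.\<close>
definition KAFw :: "'n::finite rf list \<Rightarrow> (nat \<Rightarrow> bit ^ 'n ^ 'n) \<Rightarrow> (nat \<Rightarrow> bit ^ 'n)
    \<Rightarrow> (nat \<Rightarrow> bit ^ 'n ^ 'n) \<Rightarrow> (nat \<Rightarrow> bit ^ 'n) \<Rightarrow> 'n key \<Rightarrow> 'n block \<Rightarrow> 'n block" where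
  "KAFw fs Mw Cw M C k W =
     xorb (aff (Mw 2) (Cw 2) k, aff (Mw 3) (Cw 3) k)
       (rounds fs M C k (length fs) (xorb (aff (Mw 0) (Cw 0) k, aff (Mw 1) (Cw 1) k) W))"

text \<open>A related-key query: (forward?, Delta, block). Forward queries (True, Delta, LR)
  return E_{k xor Delta}(LR); inverse queries (False, Delta, ST) return E^{-1}_{k xor Delta}(ST).\<close>
type_synonym 'n query = "bool \<times> 'n key \<times> 'n block"

definition RK :: "('n::finite key \<Rightarrow> 'n block \<Rightarrow> 'n block) \<Rightarrow> 'n key \<Rightarrow> 'n query \<Rightarrow> 'n block" where
  "RK E k q = (case q of (fwd, \<Delta>, X) \<Rightarrow>
      if fwd then E (k + \<Delta>) X else inv (E (k + \<Delta>)) X)"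

text \<open>An adaptive distinguisher with no access to the round functions:
  a query strategy (next query as a function of the answers so far) and
  a final decision (output 1 = True) as a function of all answers.\<close>
type_synonym 'n distinguisher = "('n block list \<Rightarrow> 'n query) \<times> ('n block list \<Rightarrow> bool)"

fun answers :: "('n::finite query \<Rightarrow> 'n block) \<Rightarrow> ('n block list \<Rightarrow> 'n query) \<Rightarrow> nat \<Rightarrow> 'n block list" where
  "answers Orc Q 0 = []"
| "answers Orc Q (Suc m) = (let as = answers Orc Q m in as @ [Orc (Q as)])"

definition run :: "nat \<Rightarrow> 'n::finite distinguisher \<Rightarrow> ('n query \<Rightarrow> 'n block) \<Rightarrow> bool" where
  "run q D Orc = snd D (answers Orc (fst D) q)"

definition ideal_ciphers :: "('n::finite key \<Rightarrow> 'n block \<Rightarrow> 'n block) set" where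
  "ideal_ciphers = {E. \<forall>\<kappa>. bij (E \<kappa>)}"

definition adv_rka :: "nat \<Rightarrow> 'n::finite distinguisher \<Rightarrow> ('n key \<Rightarrow> 'n block \<Rightarrow> 'n block) \<Rightarrow> real" where
  "adv_rka q D Enc =
     \<bar>measure_pmf.prob (pmf_of_set (ideal_ciphers \<times> (UNIV :: 'n key set)))
         {(E, k). run q D (RK E k)}
      - measure_pmf.prob (pmf_of_set (UNIV :: 'n key set))
         {k. run q D (RK Enc k)}\<bar>"

end

theory Submission
  imports Defs "HOL-Combinatorics.Transposition"
begin

(* A Feistel round absorbs a key difference into the state:
   Psi_kappa (W + (a, b)) = Psi_(kappa + b) W + (b, a).  Under an affine key schedule the related
   key k + d shifts round key j by M_j d, so the halves P (whitening, rounds 1-2) and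
   Q (rounds 3-4, whitening) of E_k = Q_k o P_k satisfy P_k (W + beta) = P_(k+d) W + delta and
   Q_k (m + delta') = Q_(k+d) m + alpha.  Hence the boomerang of related-key queries E_k 0,
   E_(k+d)^-1 (. + alpha), E_k (. + beta), E_(k+d)^-1 (. + alpha) surely returns to beta: after
   the second query if delta = delta', after the fourth otherwise.
   For an ideal cipher, acceptance fixes E_(k+d) beta to a value that does not change when
   E_(k+d) is composed with the transposition of beta and any y other than the preimage of
   E_k 0 + alpha.  This injects N^2 - 1 copies of the accepting ciphers into all ciphers. *)

type_synonym 'n cipher = "'n key \<Rightarrow> 'n block \<Rightarrow> 'n block"

lemma UNIV_bit: "(UNIV :: bit set) = {0, 1}"
  by (auto intro: bit.exhaust)

instance bit :: finite
  by standard (simp add: UNIV_bit)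

lemma CARD_bit [simp]: "CARD(bit) = 2"
  by (simp add: UNIV_bit)

lemma bitvec_minus [simp]: "- (x :: bit ^ 'n) = x"
  by (simp add: vec_eq_iff)

lemma bitvec_add_self [simp]: "(x :: bit ^ 'n) + x = 0"
  by (metis bitvec_minus right_minus)

lemma bitvec_add_self_left [simp]: "(x :: bit ^ 'n) + (x + y) = y"
  by (simp add: add.assoc[symmetric])

lemma CARD_block: "CARD('n::finite block) = (2 ^ CARD('n))\<^sup>2"
  by (simp add: power2_eq_square)

lemma block_minus [simp]: "- (X :: 'n::finite block) = X"
  by (cases X) simp

lemma block_add_self [simp]: "(X :: 'n::finite block) + X = 0"
  by (metis block_minus right_minus)

lemma block_add_eq_iff: "(X :: 'n::finite block) + Z = Y \<longleftrightarrow> X = Y + Z"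
  by (auto simp: add.assoc)

lemma xorb_eq_add: "xorb X Y = X + Y"
  by (cases X, cases Y) (simp add: xorb_def)

lemma aff_add: "aff A c (k + d) = aff A c k + A *v d"
  by (simp add: aff_def matrix_vector_right_distrib add_ac)

lemma Psi_add: "Psi f \<kappa> (W + (a, b)) = Psi f (\<kappa> + b) W + (b, a)"
  by (cases W) (simp add: Psi_def add_ac)

lemma Psi_Psi_add:
  "Psi g \<kappa>' (Psi f \<kappa> (W + (b, a))) = Psi g (\<kappa>' + b) (Psi f (\<kappa> + a) W) + (b, a)"
  by (simp add: Psi_add)

lemma bij_Psi: "bij (Psi f \<kappa>)"
proof (rule o_bij)
  let ?g = "\<lambda>(S, T). (T + f (\<kappa> + S), S)"
  show "?g \<circ> Psi f \<kappa> = id" "Psi f \<kappa> \<circ> ?g = id"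
    by (auto simp: Psi_def fun_eq_iff add.assoc)
qed

definition kafw_top ::
    "'n::finite rf \<Rightarrow> 'n rf \<Rightarrow> (nat \<Rightarrow> bit ^ 'n ^ 'n) \<Rightarrow> (nat \<Rightarrow> bit ^ 'n)
      \<Rightarrow> (nat \<Rightarrow> bit ^ 'n ^ 'n) \<Rightarrow> (nat \<Rightarrow> bit ^ 'n) \<Rightarrow> 'n cipher" where
  "kafw_top f1 f2 Mw Cw M C \<kappa> W =
     Psi f2 (aff (M 2) (C 2) \<kappa>) (Psi f1 (aff (M 1) (C 1) \<kappa>)
       (W + (aff (Mw 0) (Cw 0) \<kappa>, aff (Mw 1) (Cw 1) \<kappa>)))"

definition kafw_bottom ::
    "'n::finite rf \<Rightarrow> 'n rf \<Rightarrow> (nat \<Rightarrow> bit ^ 'n ^ 'n) \<Rightarrow> (nat \<Rightarrow> bit ^ 'n)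
      \<Rightarrow> (nat \<Rightarrow> bit ^ 'n ^ 'n) \<Rightarrow> (nat \<Rightarrow> bit ^ 'n) \<Rightarrow> 'n cipher" where
  "kafw_bottom f3 f4 Mw Cw M C \<kappa> m =
     Psi f4 (aff (M 4) (C 4) \<kappa>) (Psi f3 (aff (M 3) (C 3) \<kappa>) m)
       + (aff (Mw 2) (Cw 2) \<kappa>, aff (Mw 3) (Cw 3) \<kappa>)"

lemma KAFw_4_eq_bottom_comp_top:
  "KAFw [f1, f2, f3, f4] Mw Cw M C \<kappa>
     = kafw_bottom f3 f4 Mw Cw M C \<kappa> \<circ> kafw_top f1 f2 Mw Cw M C \<kappa>"
  by (simp add: fun_eq_iff KAFw_def kafw_top_def kafw_bottom_def xorb_eq_add numeral_eq_Suc
      add.commute)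

lemma bij_kafw_top: "bij (kafw_top f1 f2 Mw Cw M C \<kappa>)"
proof -
  have "kafw_top f1 f2 Mw Cw M C \<kappa>
      = Psi f2 (aff (M 2) (C 2) \<kappa>) \<circ> Psi f1 (aff (M 1) (C 1) \<kappa>)
        \<circ> (\<lambda>W. W + (aff (Mw 0) (Cw 0) \<kappa>, aff (Mw 1) (Cw 1) \<kappa>))"
    by (simp add: fun_eq_iff kafw_top_def)
  then show ?thesis
    by (simp add: bij_comp bij_Psi bij_plus_right)
qed

lemma bij_kafw_bottom: "bij (kafw_bottom f3 f4 Mw Cw M C \<kappa>)"
proof -
  have "kafw_bottom f3 f4 Mw Cw M C \<kappa>
      = (\<lambda>S. S + (aff (Mw 2) (Cw 2) \<kappa>, aff (Mw 3) (Cw 3) \<kappa>))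
        \<circ> Psi f4 (aff (M 4) (C 4) \<kappa>) \<circ> Psi f3 (aff (M 3) (C 3) \<kappa>)"
    by (simp add: fun_eq_iff kafw_bottom_def)
  then show ?thesis
    by (simp add: bij_comp bij_Psi bij_plus_right)
qed

lemma kafw_top_related_key:
  "kafw_top f1 f2 Mw Cw M C \<kappa> (W + (M 2 *v d + Mw 0 *v d, M 1 *v d + Mw 1 *v d))
     = kafw_top f1 f2 Mw Cw M C (\<kappa> + d) W + (M 2 *v d, M 1 *v d)"
  using Psi_Psi_add[of f2 "aff (M 2) (C 2) \<kappa>" f1 "aff (M 1) (C 1) \<kappa>"
      "W + (aff (Mw 0) (Cw 0) (\<kappa> + d), aff (Mw 1) (Cw 1) (\<kappa> + d))" "M 2 *v d" "M 1 *v d"]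
  by (simp add: kafw_top_def aff_add add_ac)

lemma kafw_bottom_related_key:
  "kafw_bottom f3 f4 Mw Cw M C \<kappa> (m + (M 4 *v d, M 3 *v d))
     = kafw_bottom f3 f4 Mw Cw M C (\<kappa> + d) m
       + (M 4 *v d + Mw 2 *v d, M 3 *v d + Mw 3 *v d)"
  by (simp add: kafw_bottom_def Psi_Psi_add aff_add add_ac)

definition boomerang ::
    "'n::finite key \<Rightarrow> 'n block \<Rightarrow> 'n block \<Rightarrow> bool \<Rightarrow> 'n distinguisher" where
  "boomerang d \<alpha> \<beta> closes =
     (\<lambda>as. [(True, 0, 0), (False, d, as ! 0 + \<alpha>),
             (True, 0, as ! 1 + \<beta>), (False, d, as ! 2 + \<alpha>)] ! length as,
      \<lambda>as. if closes then as ! 1 = \<beta> else as ! 1 \<noteq> \<beta> \<and> as ! 3 = \<beta>)"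

lemma run_boomerang_RK:
  "run 4 (boomerang d \<alpha> \<beta> closes) (RK E k) =
     (let a = inv (E (k + d)) (E k 0 + \<alpha>)
      in if closes then a = \<beta> else a \<noteq> \<beta> \<and> inv (E (k + d)) (E k (a + \<beta>) + \<alpha>) = \<beta>)"
  by (simp add: run_def boomerang_def RK_def numeral_eq_Suc Let_def nth_append)

lemma boomerang_accepts_factorized_cipher:
  fixes P Q :: "'n::finite cipher"
  assumes E: "\<And>\<kappa>. E \<kappa> = Q \<kappa> \<circ> P \<kappa>"
    and bij_P: "\<And>\<kappa>. bij (P \<kappa>)" and bij_Q: "\<And>\<kappa>. bij (Q \<kappa>)"
    and P: "\<And>W. P k (W + \<beta>) = P (k + d) W + \<delta>"
    and Q: "\<And>m. Q k (m + \<delta>') = Q (k + d) m + \<alpha>"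
  shows "run 4 (boomerang d \<alpha> \<beta> (\<delta> = \<delta>')) (RK E k)"
proof -
  let ?K = "k + d"
  define a where "a = inv (E ?K) (E k 0 + \<alpha>)"
  have bij_E: "bij (E \<kappa>)" for \<kappa>
    by (simp add: E bij_comp bij_P bij_Q)
  have "E ?K a = E k 0 + \<alpha>"
    using bij_E by (simp add: a_def bij_is_surj surj_f_inv_f)
  then have "Q k (P ?K a + \<delta>') = Q k (P k 0)"
    by (simp add: Q E)
  then have "P ?K a + \<delta>' = P k 0"
    by (rule injD[OF bij_is_inj[OF bij_Q]])
  then have "P ?K a = P k 0 + \<delta>'"
    by (simp add: block_add_eq_iff)
  moreover have "P k 0 = P ?K \<beta> + \<delta>"
    using P[of \<beta>] by simp
  ultimately have Pa: "P ?K a = P ?K \<beta> + (\<delta> + \<delta>')"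
    by (simp add: add.assoc)
  have "a = \<beta> \<longleftrightarrow> \<delta> = \<delta>'"
  proof -
    have "a = \<beta> \<longleftrightarrow> P ?K a = P ?K \<beta>"
      using bij_is_inj[OF bij_P] by (auto dest: injD)
    also have "\<dots> \<longleftrightarrow> \<delta> + \<delta>' = 0"
      using Pa by simp
    also have "\<dots> \<longleftrightarrow> \<delta> = \<delta>'"
      by (simp add: block_add_eq_iff)
    finally show ?thesis .
  qed
  moreover have "inv (E ?K) (E k (a + \<beta>) + \<alpha>) = \<beta>"
  proof -
    have "P k (a + \<beta>) = P ?K \<beta> + \<delta>'"
      using Pa by (simp add: P add.assoc)
    then have "E k (a + \<beta>) + \<alpha> = E ?K \<beta>"
      by (simp add: E Q add.assoc)
    then show ?thesis
      using bij_E by (simp add: bij_is_inj)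
  qed
  ultimately show ?thesis
    unfolding run_boomerang_RK Let_def a_def[symmetric] by (simp only: if_bool_eq_conj) blast
qed

lemma KAFw_4_boomerang_accepts:
  "run 4 (boomerang d (M 4 *v d + Mw 2 *v d, M 3 *v d + Mw 3 *v d)
            (M 2 *v d + Mw 0 *v d, M 1 *v d + Mw 1 *v d)
            ((M 2 *v d, M 1 *v d) = (M 4 *v d, M 3 *v d)))
     (RK (KAFw [f1, f2, f3, f4] Mw Cw M C) k)"
  by (rule boomerang_accepts_factorized_cipher[where P = "kafw_top f1 f2 Mw Cw M C"
        and Q = "kafw_bottom f3 f4 Mw Cw M C", OF KAFw_4_eq_bottom_comp_top
        bij_kafw_top bij_kafw_bottom kafw_top_related_key kafw_bottom_related_key])

text \<open>The value that acceptance forces on \<open>E (k + d) \<beta>\<close>; it depends on \<open>E (k + d)\<close>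
  only through the preimage of \<open>E k 0 + \<alpha>\<close>.\<close>
definition boomerang_target :: "'n::finite key \<Rightarrow> 'n block \<Rightarrow> 'n block \<Rightarrow> bool
    \<Rightarrow> 'n cipher \<Rightarrow> 'n key \<Rightarrow> 'n block" where
  "boomerang_target d \<alpha> \<beta> closes E k =
     (if closes then E k 0 + \<alpha> else E k (inv (E (k + d)) (E k 0 + \<alpha>) + \<beta>) + \<alpha>)"

lemma boomerang_accepts_imp_target:
  assumes "bij (E (k + d))" and "run 4 (boomerang d \<alpha> \<beta> closes) (RK E k)"
  shows "E (k + d) \<beta> = boomerang_target d \<alpha> \<beta> closes E k"
  using assms
  by (auto simp: run_boomerang_RK boomerang_target_def Let_def bij_inv_eq_iff[symmetric])

lemma boomerang_target_swap:
  fixes d :: "'n::finite key"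
  assumes "d \<noteq> 0" and bij: "bij (E (k + d))"
    and accepts: "run 4 (boomerang d \<alpha> \<beta> closes) (RK E k)"
    and y: "y \<noteq> inv (E (k + d)) (E k 0 + \<alpha>)"
  shows "boomerang_target d \<alpha> \<beta> closes (E(k + d := E (k + d) \<circ> Transposition.transpose \<beta> y)) k
         = boomerang_target d \<alpha> \<beta> closes E k"
proof (cases closes)
  case True
  then show ?thesis
    using \<open>d \<noteq> 0\<close> by (simp add: boomerang_target_def)
next
  case False
  define v where "v = inv (E (k + d)) (E k 0 + \<alpha>)"
  have "v \<noteq> \<beta>"
    using accepts False by (simp add: run_boomerang_RK v_def Let_def)
  then have "(E (k + d) \<circ> Transposition.transpose \<beta> y) v = E k 0 + \<alpha>"
    using y bij by (simp add: v_def bij_is_surj surj_f_inv_f)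
  moreover have "bij (E (k + d) \<circ> Transposition.transpose \<beta> y)"
    using bij by (simp add: bij_comp)
  ultimately have "inv (E (k + d) \<circ> Transposition.transpose \<beta> y) (E k 0 + \<alpha>) = v"
    by (metis bij_is_inj inv_f_f)
  then show ?thesis
    using False \<open>d \<noteq> 0\<close> by (simp add: boomerang_target_def v_def)
qed

lemma card_boomerang_ideal_accepts:
  fixes d :: "'n::finite key" and \<alpha> \<beta> :: "'n block" and closes :: bool
  assumes "d \<noteq> 0"
  defines "A \<equiv> ideal_ciphers \<times> UNIV \<inter> {(E, k). run 4 (boomerang d \<alpha> \<beta> closes) (RK E k)}"
  shows "(CARD('n block) - 1) * card A
           \<le> card (ideal_ciphers \<times> UNIV :: ('n cipher \<times> 'n key) set)"
proof -
  define v :: "'n cipher \<Rightarrow> 'n key \<Rightarrow> 'n block"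
    where "v E k = inv (E (k + d)) (E k 0 + \<alpha>)" for E k
  define swap where "swap E k y = E(k + d := E (k + d) \<circ> Transposition.transpose \<beta> y)"
    for E :: "'n cipher" and k y
  define Y where "Y = (\<lambda>(E, k). UNIV - {v E k})"
  define F where "F = (\<lambda>((E, k), y). (swap E k y, k))"
  define G where "G = (\<lambda>(E, k). let y = inv (E (k + d)) (boomerang_target d \<alpha> \<beta> closes E k)
                                 in ((swap E k y, k), y))"
  have "G (F p) = p" if "p \<in> Sigma A Y" for p
  proof -
    obtain E k y where p: "p = ((E, k), y)"
      by (metis prod.collapse)
    have bij: "bij (E (k + d))" and accepts: "run 4 (boomerang d \<alpha> \<beta> closes) (RK E k)"
      and y: "y \<noteq> v E k"
      using that by (auto simp: p A_def Y_def ideal_ciphers_def)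
    have "swap E k y (k + d) y = boomerang_target d \<alpha> \<beta> closes (swap E k y) k"
      using boomerang_target_swap[OF \<open>d \<noteq> 0\<close> bij accepts]
        boomerang_accepts_imp_target[OF bij accepts] y
      by (simp add: swap_def v_def)
    moreover have "bij (swap E k y (k + d))"
      using bij by (simp add: swap_def bij_comp)
    ultimately have
      "inv (swap E k y (k + d)) (boomerang_target d \<alpha> \<beta> closes (swap E k y) k) = y"
      by (metis bij_is_inj inv_f_f)
    moreover have "swap (swap E k y) k y = E"
      by (simp add: swap_def comp_assoc)
    ultimately show ?thesis
      by (simp add: p F_def G_def)
  qed
  then have "inj_on F (Sigma A Y)"
    by (rule inj_on_inverseI)
  moreover have "F ` Sigma A Y \<subseteq> ideal_ciphers \<times> UNIV"
    by (auto simp: F_def swap_def A_def ideal_ciphers_def bij_comp)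
  ultimately have
    "card (Sigma A Y) \<le> card (ideal_ciphers \<times> UNIV :: ('n cipher \<times> 'n key) set)"
    by (rule card_inj_on_le) simp
  moreover have "card (Sigma A Y) = (CARD('n block) - 1) * card A"
    by (simp add: Y_def card_Diff_singleton split_beta)
  ultimately show ?thesis
    by simp
qed

lemma prob_boomerang_ideal_accepts:
  fixes d :: "'n::finite key"
  assumes "d \<noteq> 0"
  shows "measure_pmf.prob (pmf_of_set (ideal_ciphers \<times> UNIV))
           {(E, k). run 4 (boomerang d \<alpha> \<beta> closes) (RK E k)}
         \<le> 1 / (real CARD('n block) - 1)"
proof -
  define S where "S = (ideal_ciphers \<times> UNIV :: ('n cipher \<times> 'n key) set)"
  define A where "A = S \<inter> {(E, k). run 4 (boomerang d \<alpha> \<beta> closes) (RK E k)}"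
  have "((\<lambda>_. id), 0) \<in> S"
    by (simp add: S_def ideal_ciphers_def)
  then have "card S > 0"
    by (auto simp: card_gt_0_iff)
  have "2 \<le> (2::nat) ^ CARD('n)"
    using power_increasing[of 1 "CARD('n)" "2::nat"] by (simp add: Suc_le_eq)
  then have "CARD('n block) \<ge> 4"
    unfolding CARD_block using power_mono[of "2::nat" "2 ^ CARD('n)" 2] by simp
  have "(CARD('n block) - 1) * card A \<le> card S"
    unfolding A_def S_def by (rule card_boomerang_ideal_accepts[OF assms])
  then have "real ((CARD('n block) - 1) * card A) \<le> real (card S)"
    by (simp only: of_nat_le_iff)
  then have "(real CARD('n block) - 1) * card A \<le> card S"
    using \<open>CARD('n block) \<ge> 4\<close> by (simp add: of_nat_diff)
  moreover have "real CARD('n block) - 1 > 0"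
    using \<open>CARD('n block) \<ge> 4\<close> by linarith
  ultimately have "card A / card S \<le> 1 / (real CARD('n block) - 1)"
    using \<open>card S > 0\<close> by (simp add: field_simps)
  moreover have
    "measure_pmf.prob (pmf_of_set S) {(E, k). run 4 (boomerang d \<alpha> \<beta> closes) (RK E k)}
       = card A / card S"
    unfolding A_def using \<open>((\<lambda>_. id), 0) \<in> S\<close>
    by (intro measure_pmf_of_set) (auto simp: S_def)
  ultimately show ?thesis
    by (simp add: S_def)
qed

theorem theorem3:
  fixes Mw :: "nat \<Rightarrow> bit ^ 'n::finite ^ 'n" and Cw :: "nat \<Rightarrow> bit ^ 'n"
    and M :: "nat \<Rightarrow> bit ^ 'n ^ 'n" and C :: "nat \<Rightarrow> bit ^ 'n"
  shows "\<exists>D :: 'n distinguisher. \<forall>f1 f2 f3 f4 :: 'n rf.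
           adv_rka 4 D (KAFw [f1, f2, f3, f4] Mw Cw M C)
             \<ge> 1 - 1 / (real (2 ^ CARD('n)) ^ 2 - 1)"
proof -
  define d :: "'n key" where "d = (\<chi> i. 1)"
  have "d \<noteq> 0"
    by (simp add: d_def vec_eq_iff)
  define D where "D = boomerang d
    (M 4 *v d + Mw 2 *v d, M 3 *v d + Mw 3 *v d) (M 2 *v d + Mw 0 *v d, M 1 *v d + Mw 1 *v d)
    ((M 2 *v d, M 1 *v d) = (M 4 *v d, M 3 *v d))"
  have "adv_rka 4 D (KAFw [f1, f2, f3, f4] Mw Cw M C) \<ge> 1 - 1 / (real (2 ^ CARD('n)) ^ 2 - 1)"
    for f1 f2 f3 f4 :: "'n rf"
  proof -
    have "{k. run 4 D (RK (KAFw [f1, f2, f3, f4] Mw Cw M C) k)} = UNIV"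
      unfolding D_def using KAFw_4_boomerang_accepts by blast
    then have "measure_pmf.prob (pmf_of_set UNIV)
        {k. run 4 D (RK (KAFw [f1, f2, f3, f4] Mw Cw M C) k)} = 1"
      by (simp add: measure_pmf_of_set)
    moreover have "measure_pmf.prob (pmf_of_set (ideal_ciphers \<times> UNIV)) {(E, k). run 4 D (RK E k)}
        \<le> 1 / (real (2 ^ CARD('n)) ^ 2 - 1)"
      unfolding D_def using prob_boomerang_ideal_accepts[OF \<open>d \<noteq> 0\<close>]
      unfolding CARD_block of_nat_power .
    ultimately show ?thesis
      unfolding adv_rka_def by (simp add: measure_pmf.prob_le_1)
  qed
  then show ?thesis
    by blast
qed

end
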